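(* The elements $y_1+y_2+x_3$ and $y_1+y_2+y_3$ are perfect in $D^{2,2,2}$.
   Context: $D^{2,2,2}$ is the modular lattice generated by $x_1,y_1,x_2,y_2,x_3,y_3$ subject only to $x_i\subseteq y_i$ ($i=1,2,3$), with a greatest element $I$ adjoined. Join is written $a+b$. A representation $\rho$ of $D^{2,2,2}$ in a finite-dimensional vector space $X$ is a lattice morphism from $D^{2,2,2}$ to the subspace lattice of $X$, with $\rho(I)=X$. It is indecomposable if $X\neq0$ and there is no decomposition $X=X'\oplus X''$ with $X',X''\neq0$ and $\rho(a)=(\rho(a)\cap X')+(\rho(a)\cap X'')$ for all $a$. An element $a$ is perfect if $\rho(a)\in\{0,X\}$ for every indecomposable representation $\rho$ in a space $X$. *)

theory Defs
  imports "HOL-Analysis.Analysis"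
begin

datatype idx = I1 | I2 | I3

text \<open>Lattice terms over the generators x_i, y_i of D^{2,2,2} and the adjoined top I.
  Every element of D^{2,2,2} is the value of such a term.\<close>
datatype lterm = Gx idx | Gy idx | Join lterm lterm | Meet lterm lterm | Top

definition ssum :: "('k::field ^ 'n) set \<Rightarrow> ('k ^ 'n) set \<Rightarrow> ('k ^ 'n) set" where
  "ssum A B = {u + v | u v. u \<in> A \<and> v \<in> B}"

text \<open>A representation of D^{2,2,2} in X = k^n is determined by the images of the
  generators: subspaces rx i \<subseteq> ry i.  (D^{2,2,2} is free modular on these generators
  subject to x_i \<subseteq> y_i, so these are exactly the lattice morphisms with I \<mapsto> X.)\<close>
definition is_rep :: "(idx \<Rightarrow> ('k::field ^ 'n::finite) set) \<Rightarrow> (idx \<Rightarrow> ('k ^ 'n) set) \<Rightarrow> bool" where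
  "is_rep rx ry \<longleftrightarrow> (\<forall>i. vec.subspace (rx i) \<and> vec.subspace (ry i) \<and> rx i \<subseteq> ry i)"

fun reval :: "(idx \<Rightarrow> ('k::field ^ 'n::finite) set) \<Rightarrow> (idx \<Rightarrow> ('k ^ 'n) set) \<Rightarrow> lterm \<Rightarrow> ('k ^ 'n) set" where
  "reval rx ry (Gx i) = rx i"
| "reval rx ry (Gy i) = ry i"
| "reval rx ry (Join a b) = ssum (reval rx ry a) (reval rx ry b)"
| "reval rx ry (Meet a b) = reval rx ry a \<inter> reval rx ry b"
| "reval rx ry Top = UNIV"

definition indecomposable :: "(idx \<Rightarrow> ('k::field ^ 'n::finite) set) \<Rightarrow> (idx \<Rightarrow> ('k ^ 'n) set) \<Rightarrow> bool" where
  "indecomposable rx ry \<longleftrightarrow> is_rep rx ry \<and> (UNIV :: ('k ^ 'n) set) \<noteq> {0} \<and>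
     \<not> (\<exists>X1 X2. vec.subspace X1 \<and> vec.subspace X2 \<and> X1 \<noteq> {0} \<and> X2 \<noteq> {0} \<and>
          X1 \<inter> X2 = {0} \<and> ssum X1 X2 = UNIV \<and>
          (\<forall>a. reval rx ry a = ssum (reval rx ry a \<inter> X1) (reval rx ry a \<inter> X2)))"

definition perfect :: "'k::field itself \<Rightarrow> 'n::finite itself \<Rightarrow> lterm \<Rightarrow> bool" where
  "perfect _ _ a \<longleftrightarrow> (\<forall>(rx :: idx \<Rightarrow> ('k ^ 'n) set) ry. indecomposable rx ry \<longrightarrow>
      reval rx ry a = {0} \<or> reval rx ry a = UNIV)"

end

theory Submission
  imports Defs
begin

(* Let S be the value of y1 + y2 + x3 or of y1 + y2 + y3 in an indecomposable representation.
   S contains every generator except possibly y3.  Extending a basis of S first by vectors of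
   y3 and then to a basis of X yields a complement T of S with y3 = (y3 \<inter> S) + (y3 \<inter> T).
   The decomposition X = S + T is then compatible with all generators, hence with every
   element of the lattice, so indecomposability forces T = 0 (i.e. S = X) or S = 0. *)

context finite_dimensional_vector_space
begin

lemma span_Int_span_eq_zero_if_independent:
  assumes indep: "independent (A \<union> B)" and disj: "A \<inter> B = {}"
  shows "span A \<inter> span B = {0}"
proof -
  have "finite (A \<union> B)"
    using independent_bound_general[OF indep] by blast
  have "independent A" "independent B"
    using indep independent_mono by blast+
  then have dims: "dim (span A) = card A" "dim (span B) = card B"
    by (simp_all add: dim_eq_card_independent)
  have "dim {x + y |x y. x \<in> span A \<and> y \<in> span B} = dim (span (A \<union> B))"
    by (simp only: span_Un)
  also have "\<dots> = card A + card B"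
    using indep disj \<open>finite (A \<union> B)\<close> by (simp add: dim_eq_card_independent card_Un_disjoint)
  finally have "dim (span A \<inter> span B) = 0"
    using dim_sums_Int[OF subspace_span subspace_span, of A B] dims by linarith
  then show ?thesis
    using span_zero by auto
qed

end

lemma subspace_ssum:
  fixes A B :: "('k::field ^ 'n::finite) set"
  assumes "vec.subspace A" "vec.subspace B"
  shows "vec.subspace (ssum A B)"
  unfolding ssum_def by (rule vec.subspace_sums[OF assms])

lemma ssum_least:
  fixes A B C :: "('k::field ^ 'n::finite) set"
  assumes C: "vec.subspace C" and "A \<subseteq> C" "B \<subseteq> C"
  shows "ssum A B \<subseteq> C"
proof
  fix v assume "v \<in> ssum A B"
  then obtain a b where "v = a + b" "a \<in> A" "b \<in> B"
    unfolding ssum_def by blast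
  then show "v \<in> C"
    using vec.subspace_add[OF C, of a b] assms(2,3) by blast
qed

lemma ssum_upper1: "0 \<in> B \<Longrightarrow> A \<subseteq> ssum A B"
  unfolding ssum_def by force

lemma ssum_upper2: "0 \<in> A \<Longrightarrow> B \<subseteq> ssum A B"
  unfolding ssum_def by force

lemma exists_complement_splitting:
  fixes S G :: "('k::field ^ 'n::finite) set"
  assumes S: "vec.subspace S" and G: "vec.subspace G"
  obtains T where "vec.subspace T" "S \<inter> T = {0}" "ssum S T = UNIV"
    "G = ssum (G \<inter> S) (G \<inter> T)"
proof -
  obtain B1 where B1: "B1 \<subseteq> S" "vec.independent B1" "S \<subseteq> vec.span B1"
    by (rule vec.basis_exists)
  have "vec.span B1 \<subseteq> S"
    using B1(1) S by (rule vec.span_minimal)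
  with B1(3) have S_eq: "S = vec.span B1"
    by (rule subset_antisym)
  obtain B2 where B2: "B1 \<subseteq> B2" "B2 \<subseteq> B1 \<union> G" "vec.independent B2" "B1 \<union> G \<subseteq> vec.span B2"
    by (rule vec.maximal_independent_subset_extend[of B1 "B1 \<union> G"]) (simp, rule B1(2))
  obtain B3 where B3: "B2 \<subseteq> B3" "vec.independent B3" "UNIV \<subseteq> vec.span B3"
    by (rule vec.maximal_independent_subset_extend[of B2 UNIV]) (simp, rule B2(3))
  define T where "T = vec.span (B3 - B1)"
  have B2_split: "B1 \<union> (B2 - B1) = B2"
    using B2(1) by blast
  have B3_split: "B1 \<union> (B3 - B1) = B3"
    using B2(1) B3(1) by blast
  show thesis
  proof
    show "vec.subspace T"
      unfolding T_def by (rule vec.subspace_span)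
    have "vec.independent (B1 \<union> (B3 - B1))"
      unfolding B3_split by (rule B3(2))
    then show "S \<inter> T = {0}"
      unfolding S_eq T_def by (rule vec.span_Int_span_eq_zero_if_independent[OF _ Diff_disjoint])
    show "ssum S T = UNIV"
      unfolding S_eq T_def ssum_def vec.span_Un[symmetric] B3_split
      using B3(3) by blast
    show "G = ssum (G \<inter> S) (G \<inter> T)"
    proof
      show "ssum (G \<inter> S) (G \<inter> T) \<subseteq> G"
        by (rule ssum_least[OF G]) blast+
      show "G \<subseteq> ssum (G \<inter> S) (G \<inter> T)"
      proof
        fix v assume "v \<in> G"
        then have "v \<in> vec.span (B1 \<union> (B2 - B1))"
          unfolding B2_split using B2(4) by blast
        then obtain s c where v: "v = s + c" and s: "s \<in> S" and c: "c \<in> vec.span (B2 - B1)"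
          unfolding vec.span_Un S_eq by blast
        \<comment> \<open>the new basis vectors were taken from G, so the correction c lies in G and in T\<close>
        have "vec.span (B2 - B1) \<subseteq> G"
          using B2(2) by (intro vec.span_minimal[OF _ G]) blast
        with c have "c \<in> G"
          by blast
        moreover have "vec.span (B2 - B1) \<subseteq> T"
          unfolding T_def using B3(1) by (intro vec.span_mono) blast
        with c have "c \<in> T"
          by blast
        moreover have "s \<in> G"
          using vec.subspace_diff[OF G \<open>v \<in> G\<close> \<open>c \<in> G\<close>] v by simp
        ultimately show "v \<in> ssum (G \<inter> S) (G \<inter> T)"
          unfolding ssum_def using v s by blast
      qed
    qed
  qed
qed

definition splits :: "('k::field ^ 'n::finite) set \<Rightarrow> ('k ^ 'n) set \<Rightarrow> ('k ^ 'n) set \<Rightarrow> bool" where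
  "splits X1 X2 A \<longleftrightarrow> A = ssum (A \<inter> X1) (A \<inter> X2)"

lemma splitsE:
  fixes A X1 X2 :: "('k::field ^ 'n::finite) set"
  assumes "splits X1 X2 A" "v \<in> A"
  obtains a1 a2 where "v = a1 + a2" "a1 \<in> A \<inter> X1" "a2 \<in> A \<inter> X2"
proof -
  have "A = ssum (A \<inter> X1) (A \<inter> X2)"
    using assms(1) unfolding splits_def .
  with assms(2) have "v \<in> ssum (A \<inter> X1) (A \<inter> X2)"
    by (rule back_subst[where P = "\<lambda>S. v \<in> S"])
  then obtain a1 a2 where "v = a1 + a2" "a1 \<in> A \<inter> X1" "a2 \<in> A \<inter> X2"
    unfolding ssum_def by blast
  then show thesis
    by (rule that)
qed

lemma splits_ssum:
  fixes A B X1 X2 :: "('k::field ^ 'n::finite) set"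
  assumes "vec.subspace A" "vec.subspace B" "vec.subspace X1" "vec.subspace X2"
    and A: "splits X1 X2 A" and B: "splits X1 X2 B"
  shows "splits X1 X2 (ssum A B)"
  unfolding splits_def
proof
  show "ssum (ssum A B \<inter> X1) (ssum A B \<inter> X2) \<subseteq> ssum A B"
    by (rule ssum_least[OF subspace_ssum[OF assms(1,2)]]) blast+
  show "ssum A B \<subseteq> ssum (ssum A B \<inter> X1) (ssum A B \<inter> X2)"
  proof
    fix v assume "v \<in> ssum A B"
    then obtain a b where v: "v = a + b" "a \<in> A" "b \<in> B"
      unfolding ssum_def by auto
    obtain a1 a2 where a: "a = a1 + a2" "a1 \<in> A \<inter> X1" "a2 \<in> A \<inter> X2"
      using A v(2) by (rule splitsE)
    obtain b1 b2 where b: "b = b1 + b2" "b1 \<in> B \<inter> X1" "b2 \<in> B \<inter> X2"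
      using B v(3) by (rule splitsE)
    have "a1 + b1 \<in> ssum A B \<inter> X1" "a2 + b2 \<in> ssum A B \<inter> X2"
      using a b assms(3,4) vec.subspace_add unfolding ssum_def by blast+
    moreover have "v = (a1 + b1) + (a2 + b2)"
      using v a b by (simp add: algebra_simps)
    ultimately show "v \<in> ssum (ssum A B \<inter> X1) (ssum A B \<inter> X2)"
      unfolding ssum_def by blast
  qed
qed

lemma splits_Int:
  fixes A B X1 X2 :: "('k::field ^ 'n::finite) set"
  assumes "vec.subspace A" "vec.subspace B" "vec.subspace X1" "vec.subspace X2"
    and disj: "X1 \<inter> X2 = {0}" and A: "splits X1 X2 A" and B: "splits X1 X2 B"
  shows "splits X1 X2 (A \<inter> B)"
  unfolding splits_def
proof
  show "ssum (A \<inter> B \<inter> X1) (A \<inter> B \<inter> X2) \<subseteq> A \<inter> B"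
    by (rule ssum_least[OF vec.subspace_inter[OF assms(1,2)]]) blast+
  show "A \<inter> B \<subseteq> ssum (A \<inter> B \<inter> X1) (A \<inter> B \<inter> X2)"
  proof
    fix v assume v: "v \<in> A \<inter> B"
    obtain a1 a2 where a: "v = a1 + a2" "a1 \<in> A \<inter> X1" "a2 \<in> A \<inter> X2"
      using A IntD1[OF v] by (rule splitsE)
    obtain b1 b2 where b: "v = b1 + b2" "b1 \<in> B \<inter> X1" "b2 \<in> B \<inter> X2"
      using B IntD2[OF v] by (rule splitsE)
    have "a1 - b1 \<in> X1"
      using a(2) b(2) vec.subspace_diff[OF assms(3)] by blast
    moreover have "a1 - b1 \<in> X2"
    proof -
      have "a1 - b1 = b2 - a2"
        using a(1) b(1) by (simp add: algebra_simps)
      then show ?thesis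
        using a(3) b(3) vec.subspace_diff[OF assms(4)] by (metis IntD2)
    qed
    ultimately have "a1 - b1 = 0"
      using disj by blast
    then have "a1 = b1" "a2 = b2"
      using a(1) b(1) by simp_all
    then show "v \<in> ssum (A \<inter> B \<inter> X1) (A \<inter> B \<inter> X2)"
      using a b unfolding ssum_def by blast
  qed
qed

lemma splits_if_subset:
  fixes A X1 X2 :: "('k::field ^ 'n::finite) set"
  assumes A: "vec.subspace A" and "A \<subseteq> X1" "X1 \<inter> X2 = {0}"
  shows "splits X1 X2 A"
  unfolding splits_def
proof
  have "0 \<in> A \<inter> X2"
    using vec.subspace_0[OF A] assms(3) by blast
  then show "A \<subseteq> ssum (A \<inter> X1) (A \<inter> X2)"
    using ssum_upper1[of "A \<inter> X2" "A \<inter> X1"] assms(2) by blast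
  show "ssum (A \<inter> X1) (A \<inter> X2) \<subseteq> A"
    by (rule ssum_least[OF A]) blast+
qed

lemma subspace_reval:
  assumes "is_rep rx ry"
  shows "vec.subspace (reval rx ry a)"
  using assms
  by (induction a) (auto simp: is_rep_def subspace_ssum vec.subspace_inter vec.subspace_UNIV)

lemma splits_reval:
  fixes X1 X2 :: "('k::field ^ 'n::finite) set"
  assumes rep: "is_rep rx ry" and X: "vec.subspace X1" "vec.subspace X2"
    and disj: "X1 \<inter> X2 = {0}" and sum: "ssum X1 X2 = UNIV"
    and rx: "\<And>i. splits X1 X2 (rx i)" and ry: "\<And>i. splits X1 X2 (ry i)"
  shows "splits X1 X2 (reval rx ry a)"
proof (induction a)
  case (Gx i)
  show ?case
    using rx by simp
next
  case (Gy i)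
  show ?case
    using ry by simp
next
  case (Join a b)
  then show ?case
    using splits_ssum[OF subspace_reval subspace_reval X] rep by simp
next
  case (Meet a b)
  then show ?case
    using splits_Int[OF subspace_reval subspace_reval X disj] rep by simp
next
  case Top
  show ?case
    using sum by (simp add: splits_def)
qed

lemma indecomposable_subspace_trivial_if_contains_all_but_one:
  fixes S :: "('k::field ^ 'n::finite) set"
  assumes ind: "indecomposable rx ry" and S: "vec.subspace S"
    and rx: "\<And>i. rx i \<subseteq> S" and ry: "\<And>i. i \<noteq> j \<Longrightarrow> ry i \<subseteq> S"
  shows "S = {0} \<or> S = UNIV"
proof -
  have rep: "is_rep rx ry"
    using ind by (simp add: indecomposable_def)
  then have subspaces: "vec.subspace (rx i)" "vec.subspace (ry i)" for i
    by (simp_all add: is_rep_def)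
  obtain T where T: "vec.subspace T" "S \<inter> T = {0}" "ssum S T = UNIV"
    and ry_j: "ry j = ssum (ry j \<inter> S) (ry j \<inter> T)"
    using exists_complement_splitting[OF S subspaces(2)] by blast
  have rx_splits: "splits S T (rx i)" for i
    using splits_if_subset[OF subspaces(1) rx T(2)] .
  have ry_splits: "splits S T (ry i)" for i
  proof (cases "i = j")
    case True
    then show ?thesis
      using ry_j by (simp add: splits_def)
  next
    case False
    then show ?thesis
      using splits_if_subset[OF subspaces(2) ry T(2)] by blast
  qed
  have "\<forall>a. splits S T (reval rx ry a)"
    using splits_reval[OF rep S T(1-3) rx_splits ry_splits] by blast
  then have "S = {0} \<or> T = {0}"
    using ind S T(1-3) unfolding indecomposable_def splits_def by blast
  moreover have "T = {0} \<Longrightarrow> S = UNIV"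
    using T(3) unfolding ssum_def by auto
  ultimately show ?thesis
    by blast
qed

lemma perfect_Join_y1_y2:
  assumes "\<And>rx ry :: idx \<Rightarrow> ('k::field ^ 'n::finite) set. is_rep rx ry \<Longrightarrow> rx I3 \<subseteq> reval rx ry g"
  shows "perfect TYPE('k) TYPE('n) (Join (Join (Gy I1) (Gy I2)) g)"
  unfolding perfect_def
proof (intro allI impI)
  fix rx ry :: "idx \<Rightarrow> ('k ^ 'n) set"
  assume ind: "indecomposable rx ry"
  then have rep: "is_rep rx ry"
    by (simp add: indecomposable_def)
  have zero: "0 \<in> reval rx ry a" for a
    using subspace_reval[OF rep] vec.subspace_0 by blast
  let ?Y = "ssum (ry I1) (ry I2)"
  let ?S = "reval rx ry (Join (Join (Gy I1) (Gy I2)) g)"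
  have S_eq: "?S = ssum ?Y (reval rx ry g)"
    by simp
  have "ry I1 \<subseteq> ?Y" "ry I2 \<subseteq> ?Y"
    using ssum_upper1 ssum_upper2 zero[of "Gy I1"] zero[of "Gy I2"] by simp_all
  moreover have "?Y \<subseteq> ?S" "reval rx ry g \<subseteq> ?S"
    unfolding S_eq using ssum_upper1 ssum_upper2 zero[of g] zero[of "Join (Gy I1) (Gy I2)"]
    by simp_all
  ultimately have y12: "ry I1 \<subseteq> ?S" "ry I2 \<subseteq> ?S" and g: "reval rx ry g \<subseteq> ?S"
    by blast+
  have rx_ry: "rx i \<subseteq> ry i" for i
    using rep by (simp add: is_rep_def)
  have rx_S: "rx i \<subseteq> ?S" for i
    using rx_ry[of i] y12 g assms[OF rep] by (cases i) blast+
  have ry_S: "ry i \<subseteq> ?S" if "i \<noteq> I3" for i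
    using y12 that by (cases i) auto
  show "?S = {0} \<or> ?S = UNIV"
    using indecomposable_subspace_trivial_if_contains_all_but_one[OF ind subspace_reval[OF rep] rx_S ry_S] .
qed

theorem mainTheorem13:
  shows "perfect TYPE('k::field) TYPE('n::finite) (Join (Join (Gy I1) (Gy I2)) (Gx I3))
       \<and> perfect TYPE('k::field) TYPE('n::finite) (Join (Join (Gy I1) (Gy I2)) (Gy I3))"
  by (intro conjI perfect_Join_y1_y2) (auto simp: is_rep_def)

end
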